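(* For any graph $G$ with no isolated vertex, order $n$ and maximum degree $\Delta$, $$\left\lceil\frac{2n}{\Delta+1}\right\rceil\le\gamma_{(2,2,0)}(G)\le2\gamma(G).$$ Furthermore, if $G$ has minimum degree $\delta\ge2$, then $\gamma_{(2,2,0)}(G)\le\gamma_{\times2,t}(G)$.
   Context: All graphs are finite and simple; $N(v)$ is the open neighbourhood. $\gamma_{(2,2,0)}(G)$ is the minimum of $\sum_v f(v)$ over functions $f:V(G)\to\{0,1,2\}$ such that $\sum_{u\in N(v)}f(u)\ge2$ for every $v$ with $f(v)\in\{0,1\}$ (no condition on vertices with $f(v)=2$). $\gamma(G)$ is the domination number and $\gamma_{\times2,t}(G)$ is the minimum size of $S\subseteq V(G)$ such that every vertex has at least two neighbours in $S$. *)

theory Defs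
  imports Complex_Main
begin

definition simple_graph :: "'a set \<Rightarrow> ('a \<Rightarrow> 'a \<Rightarrow> bool) \<Rightarrow> bool" where
  "simple_graph V E \<longleftrightarrow> finite V \<and> (\<forall>u v. E u v \<longrightarrow> u \<in> V \<and> v \<in> V)
     \<and> (\<forall>u v. E u v \<longrightarrow> E v u) \<and> (\<forall>v. \<not> E v v)"

definition nbhd :: "'a set \<Rightarrow> ('a \<Rightarrow> 'a \<Rightarrow> bool) \<Rightarrow> 'a \<Rightarrow> 'a set" where
  "nbhd V E v = {u \<in> V. E v u}"

definition degree :: "'a set \<Rightarrow> ('a \<Rightarrow> 'a \<Rightarrow> bool) \<Rightarrow> 'a \<Rightarrow> nat" where
  "degree V E v = card (nbhd V E v)"

definition max_degree :: "'a set \<Rightarrow> ('a \<Rightarrow> 'a \<Rightarrow> bool) \<Rightarrow> nat" where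
  "max_degree V E = Max (degree V E ` V)"

definition min_degree :: "'a set \<Rightarrow> ('a \<Rightarrow> 'a \<Rightarrow> bool) \<Rightarrow> nat" where
  "min_degree V E = Min (degree V E ` V)"

text \<open>(2,2,0)-functions: f : V \<rightarrow> {0,1,2}, and every v with f v \<in> {0,1}
 has neighbourhood weight at least 2.  (Values outside V are irrelevant; we
 fix them to 0.)\<close>
definition is_220_function :: "'a set \<Rightarrow> ('a \<Rightarrow> 'a \<Rightarrow> bool) \<Rightarrow> ('a \<Rightarrow> nat) \<Rightarrow> bool" where
  "is_220_function V E f \<longleftrightarrow> (\<forall>v\<in>V. f v \<le> 2) \<and> (\<forall>v. v \<notin> V \<longrightarrow> f v = 0)
     \<and> (\<forall>v\<in>V. f v \<in> {0,1} \<longrightarrow> (\<Sum>u\<in>nbhd V E v. f u) \<ge> 2)"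

definition gamma_220 :: "'a set \<Rightarrow> ('a \<Rightarrow> 'a \<Rightarrow> bool) \<Rightarrow> nat" where
  "gamma_220 V E = Min {(\<Sum>v\<in>V. f v) | f. is_220_function V E f}"

definition dominating_set :: "'a set \<Rightarrow> ('a \<Rightarrow> 'a \<Rightarrow> bool) \<Rightarrow> 'a set \<Rightarrow> bool" where
  "dominating_set V E S \<longleftrightarrow> S \<subseteq> V \<and> (\<forall>v\<in>V. v \<in> S \<or> (\<exists>u\<in>S. E v u))"

definition domination_number :: "'a set \<Rightarrow> ('a \<Rightarrow> 'a \<Rightarrow> bool) \<Rightarrow> nat" where
  "domination_number V E = Min {card S | S. dominating_set V E S}"

definition double_total_dominating_set :: "'a set \<Rightarrow> ('a \<Rightarrow> 'a \<Rightarrow> bool) \<Rightarrow> 'a set \<Rightarrow> bool" where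
  "double_total_dominating_set V E S \<longleftrightarrow> S \<subseteq> V \<and> (\<forall>v\<in>V. card (nbhd V E v \<inter> S) \<ge> 2)"

definition double_total_domination_number :: "'a set \<Rightarrow> ('a \<Rightarrow> 'a \<Rightarrow> bool) \<Rightarrow> nat" where
  "double_total_domination_number V E = Min {card S | S. double_total_dominating_set V E S}"

end

theory Submission
  imports Defs
begin

text \<open>Every vertex v satisfies f v + f(N(v)) \<ge> 2 for a (2,2,0)-function f; summing over v and
  double counting gives 2n \<le> \<Sum> f v (1 + deg v) \<le> (\<Delta> + 1) \<Sum> f v.
  The upper bounds come from explicit (2,2,0)-functions: weight 2 on a dominating set,
  and weight 1 on a double total dominating set.\<close>

lemma finite_220_weights:
  assumes "finite V"
  shows "finite {(\<Sum>v\<in>V. f v) | f. is_220_function V E f}"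
proof (rule finite_subset)
  show "{(\<Sum>v\<in>V. f v) | f. is_220_function V E f} \<subseteq> {..2 * card V}"
  proof
    fix x assume "x \<in> {(\<Sum>v\<in>V. f v) | f. is_220_function V E f}"
    then obtain f where x: "x = (\<Sum>v\<in>V. f v)" and "is_220_function V E f" by blast
    then have "(\<Sum>v\<in>V. f v) \<le> (\<Sum>v\<in>V. 2)"
      by (intro sum_mono) (auto simp: is_220_function_def)
    then show "x \<in> {..2 * card V}" using x by simp
  qed
qed simp

lemma gamma_220_le:
  assumes "finite V" "is_220_function V E f"
  shows "gamma_220 V E \<le> (\<Sum>v\<in>V. f v)"
  unfolding gamma_220_def using finite_220_weights[OF assms(1)] assms(2)
  by (intro Min_le) auto

lemma gamma_220_attained:
  assumes "finite V"
  obtains f where "is_220_function V E f" "gamma_220 V E = (\<Sum>v\<in>V. f v)"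
proof -
  have "is_220_function V E (\<lambda>v. if v \<in> V then 2 else 0)"
    unfolding is_220_function_def by auto
  then have "{(\<Sum>v\<in>V. f v) | f. is_220_function V E f} \<noteq> {}" by blast
  then have "gamma_220 V E \<in> {(\<Sum>v\<in>V. f v) | f. is_220_function V E f}"
    unfolding gamma_220_def by (intro Min_in finite_220_weights assms)
  then show ?thesis using that by blast
qed

lemma domination_number_attained:
  assumes "finite V"
  obtains S where "dominating_set V E S" "domination_number V E = card S"
proof -
  have "{card S | S. dominating_set V E S} \<subseteq> card ` Pow V"
    unfolding dominating_set_def by auto
  then have "finite {card S | S. dominating_set V E S}"
    using assms finite_subset by blast
  moreover have "dominating_set V E V" unfolding dominating_set_def by auto
  ultimately have "domination_number V E \<in> {card S | S. dominating_set V E S}"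
    unfolding domination_number_def by (intro Min_in) auto
  then show ?thesis using that by blast
qed

lemma double_total_domination_number_attained:
  assumes "finite V" and "double_total_dominating_set V E T"
  obtains S where "double_total_dominating_set V E S"
    and "double_total_domination_number V E = card S"
proof -
  have "{card S | S. double_total_dominating_set V E S} \<subseteq> card ` Pow V"
    unfolding double_total_dominating_set_def by auto
  then have "finite {card S | S. double_total_dominating_set V E S}"
    using assms(1) finite_subset by blast
  then have "double_total_domination_number V E \<in> {card S | S. double_total_dominating_set V E S}"
    unfolding double_total_domination_number_def using assms(2) by (intro Min_in) auto
  then show ?thesis using that by blast
qed

lemma double_total_dominating_set_vertices:
  assumes "finite V" and "min_degree V E \<ge> 2"
  shows "double_total_dominating_set V E V"
proof -
  have "min_degree V E \<le> degree V E v" if "v \<in> V" for v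
    unfolding min_degree_def using assms(1) that by (intro Min_le) auto
  then show ?thesis
    using assms(2) unfolding double_total_dominating_set_def degree_def
    by (auto simp: nbhd_def Int_absorb2 intro: order.trans)
qed

lemma sum_nbhd_sum_eq_sum_degree:
  fixes f :: "'a \<Rightarrow> 'b::comm_semiring_1"
  assumes "simple_graph V E"
  shows "(\<Sum>v\<in>V. \<Sum>u\<in>nbhd V E v. f u) = (\<Sum>u\<in>V. of_nat (degree V E u) * f u)"
proof -
  have fin: "finite V" and sym: "\<And>u v. E u v \<Longrightarrow> E v u"
    using assms unfolding simple_graph_def by auto
  have "(\<Sum>v\<in>V. \<Sum>u\<in>nbhd V E v. f u) = (\<Sum>v\<in>V. \<Sum>u\<in>V. if E v u then f u else 0)"
    unfolding nbhd_def using fin by (simp add: sum.inter_filter)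
  also have "\<dots> = (\<Sum>u\<in>V. \<Sum>v\<in>V. if E v u then f u else 0)"
    by (rule sum.swap)
  also have "\<dots> = (\<Sum>u\<in>V. of_nat (degree V E u) * f u)"
  proof -
    have "V \<inter> {v. E v u} = nbhd V E u" for u
      unfolding nbhd_def using sym by blast
    then show ?thesis using fin by (simp add: sum.If_cases degree_def)
  qed
  finally show ?thesis .
qed

lemma degree_le_max_degree:
  assumes "finite V" and "v \<in> V"
  shows "degree V E v \<le> max_degree V E"
  unfolding max_degree_def using assms by (intro Max_ge) auto

lemma weight_220_function_lower_bound:
  assumes "simple_graph V E" and f: "is_220_function V E f"
  shows "2 * card V \<le> (\<Sum>v\<in>V. f v) * (max_degree V E + 1)"
proof -
  have fin: "finite V" using assms(1) unfolding simple_graph_def by auto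
  have closed: "2 \<le> f v + (\<Sum>u\<in>nbhd V E v. f u)" if "v \<in> V" for v
    using f that unfolding is_220_function_def by (cases "f v \<in> {0,1}") auto
  have "2 * card V = (\<Sum>v\<in>V. 2)" by simp
  also have "\<dots> \<le> (\<Sum>v\<in>V. f v + (\<Sum>u\<in>nbhd V E v. f u))"
    by (intro sum_mono closed)
  also have "\<dots> = (\<Sum>v\<in>V. f v) + (\<Sum>u\<in>V. degree V E u * f u)"
    by (simp add: sum.distrib sum_nbhd_sum_eq_sum_degree[OF assms(1)])
  also have "\<dots> \<le> (\<Sum>v\<in>V. f v) + (\<Sum>u\<in>V. max_degree V E * f u)"
    by (intro add_left_mono sum_mono mult_right_mono degree_le_max_degree[OF fin]) auto
  also have "\<dots> = (\<Sum>v\<in>V. f v) * (max_degree V E + 1)"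
    by (simp add: sum_distrib_left algebra_simps)
  finally show ?thesis .
qed

lemma gamma_220_lower_bound:
  assumes "simple_graph V E"
  shows "\<lceil>(2 * real (card V)) / (real (max_degree V E) + 1)\<rceil> \<le> int (gamma_220 V E)"
proof -
  obtain f where f: "is_220_function V E f" and w: "gamma_220 V E = (\<Sum>v\<in>V. f v)"
    using gamma_220_attained assms unfolding simple_graph_def by blast
  have "2 * card V \<le> gamma_220 V E * (max_degree V E + 1)"
    using weight_220_function_lower_bound[OF assms f] w by simp
  then have "2 * real (card V) \<le> real (gamma_220 V E) * (real (max_degree V E) + 1)"
    by (metis of_nat_1 of_nat_add of_nat_le_iff of_nat_mult of_nat_numeral)
  then show ?thesis
    by (simp add: ceiling_le_iff divide_le_eq add_nonneg_pos)
qed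

lemma is_220_function_of_dominating_set:
  assumes "finite V" and S: "dominating_set V E S"
  shows "is_220_function V E (\<lambda>v. if v \<in> S then 2 else 0)"
  unfolding is_220_function_def
proof (intro conjI ballI allI impI)
  fix v assume v: "v \<in> V" and "(if v \<in> S then 2 else 0) \<in> {0, 1::nat}"
  then obtain u where u: "u \<in> S" "E v u"
    using S unfolding dominating_set_def by auto
  then have "u \<in> nbhd V E v" using S unfolding nbhd_def dominating_set_def by auto
  moreover have "finite (nbhd V E v)" using assms(1) unfolding nbhd_def by auto
  ultimately have "(if u \<in> S then 2 else 0) \<le> (\<Sum>w\<in>nbhd V E v. if w \<in> S then 2 else (0::nat))"
    by (intro member_le_sum) auto
  then show "2 \<le> (\<Sum>w\<in>nbhd V E v. if w \<in> S then 2 else (0::nat))" using u by simp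
qed (use S in \<open>auto simp: dominating_set_def\<close>)

lemma is_220_function_of_double_total_dominating_set:
  assumes "finite V" and S: "double_total_dominating_set V E S"
  shows "is_220_function V E (\<lambda>v. if v \<in> S then 1 else 0)"
  unfolding is_220_function_def
proof (intro conjI ballI allI impI)
  fix v assume "v \<in> V"
  moreover have "(\<Sum>w\<in>nbhd V E v. if w \<in> S then 1 else 0) = card (nbhd V E v \<inter> S)"
    using assms(1) unfolding nbhd_def by (simp add: sum.If_cases)
  ultimately show "2 \<le> (\<Sum>w\<in>nbhd V E v. if w \<in> S then 1 else (0::nat))"
    using S unfolding double_total_dominating_set_def by auto
qed (use S in \<open>auto simp: double_total_dominating_set_def\<close>)

lemma sum_indicator_weight:
  fixes c :: "'b::comm_semiring_1"
  assumes "finite V" and "S \<subseteq> V"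
  shows "(\<Sum>v\<in>V. if v \<in> S then c else 0) = of_nat (card S) * c"
  using assms by (simp add: sum.If_cases Int_absorb1)

lemma gamma_220_le_twice_domination_number:
  assumes "finite V"
  shows "gamma_220 V E \<le> 2 * domination_number V E"
proof -
  obtain S where S: "dominating_set V E S" and "domination_number V E = card S"
    using domination_number_attained[OF assms] .
  moreover have "S \<subseteq> V" using S unfolding dominating_set_def by auto
  ultimately show ?thesis
    using gamma_220_le[OF assms is_220_function_of_dominating_set[OF assms S]]
    by (simp add: sum_indicator_weight[OF assms])
qed

lemma gamma_220_le_double_total_domination_number:
  assumes "finite V" and "min_degree V E \<ge> 2"
  shows "gamma_220 V E \<le> double_total_domination_number V E"
proof -
  obtain S where S: "double_total_dominating_set V E S"
    and "double_total_domination_number V E = card S"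
    using double_total_domination_number_attained[OF assms(1)
        double_total_dominating_set_vertices[OF assms]] .
  moreover have "S \<subseteq> V" using S unfolding double_total_dominating_set_def by auto
  ultimately show ?thesis
    using gamma_220_le[OF assms(1) is_220_function_of_double_total_dominating_set[OF assms(1) S]]
    by (simp add: sum_indicator_weight[OF assms(1)])
qed

theorem theorem31:
  fixes V :: "'a set" and E :: "'a \<Rightarrow> 'a \<Rightarrow> bool"
  assumes "simple_graph V E" and "V \<noteq> {}"
    and no_isolated: "\<forall>v\<in>V. nbhd V E v \<noteq> {}"
  shows "\<lceil>(2 * real (card V)) / (real (max_degree V E) + 1)\<rceil> \<le> int (gamma_220 V E)
     \<and> gamma_220 V E \<le> 2 * domination_number V E
     \<and> (min_degree V E \<ge> 2 \<longrightarrow> gamma_220 V E \<le> double_total_domination_number V E)"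
proof -
  have "finite V" using assms(1) unfolding simple_graph_def by auto
  then show ?thesis
    using gamma_220_lower_bound[OF assms(1)] gamma_220_le_twice_domination_number
      gamma_220_le_double_total_domination_number by blast
qed

end
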